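(* Let $G$ be a finite primitive monolithic soluble group, let $N=\operatorname{soc}(G)$ and let $H$ be a core-free maximal subgroup of $G$. Given $1\neq h\in H$ and $n\in N$, we have $hn\in V(G)$ if and only if $h\in V(H)$.
   Context: For a finite group $X$, $V(X)$ is the set of elements $x\in X$ such that $X=\langle x,y\rangle$ for some $y\in X$. A primitive monolithic group is one having a core-free maximal subgroup and a unique minimal normal subgroup. *)

theory Defs
  imports "HOL-Algebra.Algebra"
begin

definition gen_elems :: "('a, 'b) monoid_scheme \<Rightarrow> 'a set" where
  "gen_elems K = {a \<in> carrier K. \<exists>b \<in> carrier K. generate K {a, b} = carrier K}"

definition maximal_subgroup :: "'a set \<Rightarrow> ('a, 'b) monoid_scheme \<Rightarrow> bool" where
  "maximal_subgroup M G \<longleftrightarrow> subgroup M G \<and> M \<noteq> carrier G \<and>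
     (\<forall>K. subgroup K G \<and> M \<subseteq> K \<longrightarrow> K = M \<or> K = carrier G)"

definition core :: "'a set \<Rightarrow> ('a, 'b) monoid_scheme \<Rightarrow> 'a set" where
  "core M G = (\<Inter>g \<in> carrier G. (g <#\<^bsub>G\<^esub> M) #>\<^bsub>G\<^esub> (inv\<^bsub>G\<^esub> g))"

definition core_free :: "'a set \<Rightarrow> ('a, 'b) monoid_scheme \<Rightarrow> bool" where
  "core_free M G \<longleftrightarrow> core M G = {\<one>\<^bsub>G\<^esub>}"

definition minimal_normal :: "'a set \<Rightarrow> ('a, 'b) monoid_scheme \<Rightarrow> bool" where
  "minimal_normal N G \<longleftrightarrow> N \<lhd> G \<and> N \<noteq> {\<one>\<^bsub>G\<^esub>} \<and>
     (\<forall>K. K \<lhd> G \<and> K \<subseteq> N \<longrightarrow> K = {\<one>\<^bsub>G\<^esub>} \<or> K = N)"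

definition socle :: "('a, 'b) monoid_scheme \<Rightarrow> 'a set" where
  "socle G = generate G (\<Union>{N. minimal_normal N G})"

definition primitive_monolithic :: "('a, 'b) monoid_scheme \<Rightarrow> bool" where
  "primitive_monolithic G \<longleftrightarrow> (\<exists>M. maximal_subgroup M G \<and> core_free M G) \<and>
     (\<exists>!N. minimal_normal N G)"

end

(* Since N is abelian, G = H N with H and N intersecting trivially, so a generating pair of G
   projects to a generating pair of H.  For the converse let H = <h, k> and suppose that no
   <h n, k m> with m in N equals G.  These |N| subgroups are then pairwise distinct complements
   of N.  Every complement W of N is conjugate to H by an element of N: a minimal normal
   subgroup L of H is a q-group with q not dividing |N|, so the q-group W meet L N fixes one of
   the |N| right cosets L v of L in L N; this gives v (W meet L N) v^-1 = L, hence v W v^-1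
   normalises L, and the normaliser of L is H.  So the subgroups <h n, k m> are exactly the
   N-conjugates of H, whence h n lies in the trivial core of H and h = n^-1 lies in H meet N,
   i.e. h = 1. *)
theory Submission
  imports Defs
begin

section \<open>Fixed points of actions of groups of prime power order\<close>

lemma (in group) right_action_imp_group_action:
  assumes closed: "\<And>e x. e \<in> E \<Longrightarrow> x \<in> carrier G \<Longrightarrow> act e x \<in> E"
    and act_one: "\<And>e. e \<in> E \<Longrightarrow> act e \<one> = e"
    and act_mult: "\<And>e x y. e \<in> E \<Longrightarrow> x \<in> carrier G \<Longrightarrow> y \<in> carrier G \<Longrightarrow>
                     act (act e x) y = act e (x \<otimes> y)"
  shows "group_action G E (\<lambda>x. \<lambda>e\<in>E. act e (inv x))"
proof -
  define \<phi> where "\<phi> = (\<lambda>x. \<lambda>e\<in>E. act e (inv x))"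
  have cancel: "\<phi> (inv x) (\<phi> x e) = e" if "x \<in> carrier G" "e \<in> E" for x e
    using that by (simp add: \<phi>_def closed act_mult act_one)
  have "\<phi> x \<in> carrier (BijGroup E)" if x: "x \<in> carrier G" for x
  proof -
    have "bij_betw (\<phi> x) E E"
      by (rule bij_betwI[where g = "\<phi> (inv x)"])
        (use x cancel[of x] cancel[of "inv x"] in \<open>auto simp: \<phi>_def closed\<close>)
    then show ?thesis by (simp add: BijGroup_def Bij_def \<phi>_def)
  qed
  moreover have "\<phi> (x \<otimes> y) = \<phi> x \<otimes>\<^bsub>BijGroup E\<^esub> \<phi> y"
    if "x \<in> carrier G" "y \<in> carrier G" for x y
    using that calculation
    by (auto simp: BijGroup_def compose_def \<phi>_def closed act_mult inv_mult_group)
  ultimately have "\<phi> \<in> hom G (BijGroup E)" by (intro homI)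
  then show ?thesis
    unfolding group_action_def group_hom_def group_hom_axioms_def \<phi>_def[symmetric]
    using group_BijGroup is_group by blast
qed

lemma (in group_action) prime_dvd_card_orbit:
  assumes q: "Factorial_Ring.prime q" and order: "order G = q ^ b"
    and e: "e \<in> E" and moved: "g \<in> carrier G" "\<phi> g e \<noteq> e"
  shows "q dvd card (orbit G \<phi> e)"
proof -
  have "card (orbit G \<phi> e) dvd q ^ b"
    using orbit_stabilizer_theorem[OF e] order dvd_triv_left by metis
  then obtain i where i: "card (orbit G \<phi> e) = q ^ i"
    using divides_primepow_nat[OF q] by blast
  have "{e, \<phi> g e} \<subseteq> orbit G \<phi> e"
    using orbit_refl[OF e] moved(1) by (auto simp: orbit_def)
  moreover have "finite (orbit G \<phi> e)"
    using i q by (metis card.infinite not_prime_0 power_not_zero)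
  ultimately have "card {e, \<phi> g e} \<le> card (orbit G \<phi> e)" by (simp add: card_mono)
  then have "i \<noteq> 0" using i moved(2) by (cases i) auto
  then show ?thesis using i by simp
qed

lemma (in group_action) card_fixed_points_mod:
  assumes "finite E" and q: "Factorial_Ring.prime q" and order: "order G = q ^ b"
  shows "card E mod q = card {e \<in> E. \<forall>g \<in> carrier G. \<phi> g e = e} mod q"
proof -
  interpret group G using group_hom group_hom.axioms(1) by blast
  define Fix where "Fix = {e \<in> E. \<forall>g \<in> carrier G. \<phi> g e = e}"
  have orbit_Fix: "orbit G \<phi> e = {e}" if "e \<in> Fix" for e
    using that by (auto simp: Fix_def orbit_def) (metis one_closed)
  have "q dvd card (orb - Fix)" if orb: "orb \<in> orbits G E \<phi>" for orb
  proof -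
    obtain e where e: "e \<in> E" "orb = orbit G \<phi> e" using orb by (auto simp: orbits_def)
    show ?thesis
    proof (cases "e \<in> Fix")
      case True
      then show ?thesis using e orbit_Fix by simp
    next
      case False
      then obtain g where g: "g \<in> carrier G" "\<phi> g e \<noteq> e" using e(1) by (auto simp: Fix_def)
      have "x = e" if "x \<in> orbit G \<phi> e" "x \<in> Fix" for x
        using orbit_sym[OF e(1) _ that(1)] orbit_Fix[OF that(2)] that(2) by (auto simp: Fix_def)
      then have "orb - Fix = orb" using e False by blast
      then show ?thesis using e prime_dvd_card_orbit[OF q order e(1) g] by simp
    qed
  qed
  then have "q dvd (\<Sum>orb\<in>orbits G E \<phi>. card (orb - Fix))"
    by (rule dvd_sum)
  also have "(\<Sum>orb\<in>orbits G E \<phi>. card (orb - Fix)) =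
             (\<Sum>orb\<in>orbits G E \<phi>. \<Sum>e\<in>orb. of_bool (e \<notin> Fix))"
  proof (rule sum.cong)
    fix orb assume "orb \<in> orbits G E \<phi>"
    then have "finite orb"
      using orbits_coverture \<open>finite E\<close> by (metis Union_upper finite_subset)
    then show "card (orb - Fix) = (\<Sum>e\<in>orb. of_bool (e \<notin> Fix))"
      by (simp add: set_diff_eq Int_def)
  qed simp
  also have "\<dots> = card (E - Fix)"
    using \<open>finite E\<close> disjoint_sum[OF \<open>finite E\<close>, of "\<lambda>e. of_bool (e \<notin> Fix) :: nat"]
    by (simp add: set_diff_eq Int_def)
  finally have "q dvd card (E - Fix)" .
  moreover have "card E = card Fix + card (E - Fix)"
    using \<open>finite E\<close> by (simp add: Fix_def card_Diff_subset card_mono)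
  ultimately show ?thesis unfolding Fix_def by (simp add: mod_add_right_eq[symmetric])
qed

lemma (in group) card_right_action_fixed_points_mod:
  assumes "finite E" and "Factorial_Ring.prime q" and "order G = q ^ b"
    and closed: "\<And>e x. e \<in> E \<Longrightarrow> x \<in> carrier G \<Longrightarrow> act e x \<in> E"
    and act_one: "\<And>e. e \<in> E \<Longrightarrow> act e \<one> = e"
    and act_mult: "\<And>e x y. e \<in> E \<Longrightarrow> x \<in> carrier G \<Longrightarrow> y \<in> carrier G \<Longrightarrow>
                     act (act e x) y = act e (x \<otimes> y)"
  shows "card E mod q = card {e \<in> E. \<forall>x \<in> carrier G. act e x = e} mod q"
proof -
  interpret group_action G E "\<lambda>x. \<lambda>e\<in>E. act e (inv x)"
    using right_action_imp_group_action[OF closed act_one act_mult] .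
  have "(\<forall>x \<in> carrier G. act e (inv x) = e) \<longleftrightarrow> (\<forall>x \<in> carrier G. act e x = e)" for e
    by (metis inv_closed inv_inv)
  then have "{e \<in> E. \<forall>x \<in> carrier G. (\<lambda>e\<in>E. act e (inv x)) e = e} =
             {e \<in> E. \<forall>x \<in> carrier G. act e x = e}"
    by auto
  then show ?thesis using card_fixed_points_mod[OF assms(1-3)] by simp
qed

section \<open>Minimal normal subgroups of soluble groups\<close>

context group
begin

lemma inv_mult_cancel_left [simp]:
  "x \<in> carrier G \<Longrightarrow> y \<in> carrier G \<Longrightarrow> inv x \<otimes> (x \<otimes> y) = y"
  by (simp add: m_assoc[symmetric])

lemma mult_inv_cancel_left [simp]:
  "x \<in> carrier G \<Longrightarrow> y \<in> carrier G \<Longrightarrow> x \<otimes> (inv x \<otimes> y) = y"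
  by (simp add: m_assoc[symmetric])

lemma conj_nat_pow:
  assumes "g \<in> carrier G" "x \<in> carrier G"
  shows "(g \<otimes> x \<otimes> inv g) [^] (n::nat) = g \<otimes> x [^] n \<otimes> inv g"
proof (induction n)
  case (Suc n)
  then show ?case using assms by (simp add: m_assoc)
qed (use assms in simp)

lemma cauchy_theorem:
  assumes "finite (carrier G)" and r: "Factorial_Ring.prime r" "r dvd order G"
  obtains x where "x \<in> carrier G" "x \<noteq> \<one>" "x [^] r = \<one>"
proof -
  define a where "a = multiplicity r (order G)"
  obtain m where "order G = r ^ a * m"
    unfolding a_def by (metis multiplicity_dvd dvd_def)
  then obtain P where P: "subgroup P G" "card P = r ^ a"
    using sylow_thm[OF r(1) is_group _ assms(1)] by blast
  have "a \<ge> 1"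
    unfolding a_def
  proof (rule multiplicity_geI)
    show "order G \<noteq> 0" using assms(1) order_gt_0_iff_finite by simp
    show "\<not> is_unit r" using prime_gt_1_nat[OF r(1)] by simp
  qed (use r(2) in simp)
  then have "r \<le> r ^ a" using power_increasing[of 1 a r] prime_gt_0_nat[OF r(1)] by simp
  then have "card P \<noteq> 1" using P(2) prime_gt_1_nat[OF r(1)] by linarith
  then have "P \<noteq> {\<one>}" by auto
  then obtain x where x: "x \<in> P" "x \<noteq> \<one>"
    using subgroup.one_closed[OF P(1)] by blast
  have xc: "x \<in> carrier G" using subgroup.mem_carrier[OF P(1) x(1)] .
  interpret P: group "G\<lparr>carrier := P\<rparr>" using subgroup_imp_group[OF P(1)] .
  have "x [^] (r ^ a) = \<one>"
    using P.pow_order_eq_1[of x] x(1) P(2) nat_pow_consistent[of x "r ^ a" P]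
    by (simp add: order_def)
  then have "ord x dvd r ^ a" using pow_eq_id[OF xc] by simp
  then obtain j where j: "ord x = r ^ j"
    using divides_primepow_nat[OF r(1)] by auto
  have "j \<noteq> 0" using j ord_eq_1[OF xc] x(2) by auto
  then obtain i where i: "j = Suc i" using not0_implies_Suc by blast
  define y where "y = x [^] (r ^ i)"
  have "y \<noteq> \<one>"
    unfolding y_def using pow_eq_id[OF xc, of "r ^ i"] j i prime_gt_1_nat[OF r(1)]
    by (simp add: nat_dvd_not_less)
  moreover have "y [^] r = \<one>"
    unfolding y_def using xc j i by (simp add: nat_pow_pow mult.commute) (metis pow_ord_eq_1)
  moreover have "y \<in> carrier G" unfolding y_def using xc by simp
  ultimately show ?thesis using that by blast
qed

lemma cauchy_theorem_subgroup:
  assumes "subgroup M G" "finite M" "Factorial_Ring.prime r" "r dvd card M"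
  shows "\<exists>x\<in>M. x \<noteq> \<one> \<and> x [^] r = \<one>"
proof -
  interpret M: group "G\<lparr>carrier := M\<rparr>" using subgroup_imp_group[OF assms(1)] .
  show ?thesis
    using M.cauchy_theorem[of r] assms(2-4) nat_pow_consistent[of _ r M] by (auto simp: order_def)
qed

lemma minimal_normal_solvable_commute:
  assumes "solvable G" and M: "minimal_normal M G" and "x \<in> M" "y \<in> M"
  shows "x \<otimes> y = y \<otimes> x"
proof -
  have Mn: "M \<lhd> G" and Ms: "subgroup M G" using M normal_imp_subgroup
    by (auto simp: minimal_normal_def)
  have "derived G M \<noteq> M"
  proof
    assume "derived G M = M"
    then have "(derived G ^^ n) M = M" for n by (induction n) simp_all
    moreover obtain n where "(derived G ^^ n) (carrier G) = {\<one>}"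
      using assms(1) solvable_iff_trivial_derived_seq by blast
    ultimately have "M \<subseteq> {\<one>}"
      using mono_exp_of_derived[OF subgroup.subset[OF Ms], of n] by simp
    then show False using M subgroup.one_closed[OF Ms] by (auto simp: minimal_normal_def)
  qed
  then have "derived G M = {\<one>}"
    using M derived_is_normal[OF Mn] derived_incl[OF subset_refl Ms]
    by (auto simp: minimal_normal_def)
  moreover have "x \<otimes> y \<otimes> inv x \<otimes> inv y \<in> derived G M"
    unfolding derived_def using assms(3,4) by (blast intro: generate.incl)
  ultimately have commutator: "x \<otimes> y \<otimes> inv x \<otimes> inv y = \<one>" by simp
  have "x \<in> carrier G" "y \<in> carrier G" using assms(3,4) subgroup.mem_carrier[OF Ms] by auto
  then have "x \<otimes> y = (x \<otimes> y \<otimes> inv x \<otimes> inv y) \<otimes> (y \<otimes> x)" by (simp add: m_assoc)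
  also have "\<dots> = y \<otimes> x" using \<open>y \<in> carrier G\<close> \<open>x \<in> carrier G\<close> by (simp add: commutator)
  finally show ?thesis .
qed

lemma minimal_normal_solvable_pow_prime:
  assumes fin: "finite (carrier G)" and "solvable G" and M: "minimal_normal M G"
    and q: "Factorial_Ring.prime q" "q dvd card M" and "x \<in> M"
  shows "x [^] q = \<one>"
proof -
  have Mn: "M \<lhd> G" and Ms: "subgroup M G"
    using M normal_imp_subgroup by (auto simp: minimal_normal_def)
  have Mc: "M \<subseteq> carrier G" using subgroup.subset[OF Ms] .
  define Mq where "Mq = {x \<in> M. x [^] q = \<one>}"
  have "subgroup Mq G"
  proof (rule subgroupI)
    show "a \<otimes> b \<in> Mq" if "a \<in> Mq" "b \<in> Mq" for a b
    proof -
      have "a \<in> M" "b \<in> M" "a [^] q = \<one>" "b [^] q = \<one>" using that by (auto simp: Mq_def)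
      moreover have "(a \<otimes> b) [^] q = a [^] q \<otimes> b [^] q"
        using calculation Mc pow_mult_distrib[OF minimal_normal_solvable_commute[OF assms(2) M]]
        by blast
      ultimately show ?thesis using Mc subgroup.m_closed[OF Ms] by (auto simp: Mq_def)
    qed
  qed (use Mc subgroup.one_closed[OF Ms] subgroup.m_inv_closed[OF Ms] in
       \<open>auto simp: Mq_def nat_pow_inv\<close>)
  then have "Mq \<lhd> G"
    using Mc normal.inv_op_closed2[OF Mn] conj_nat_pow by (auto simp: Mq_def intro!: normal_invI)
  moreover have "finite M" using fin Mc finite_subset by blast
  then have "Mq \<noteq> {\<one>}" using cauchy_theorem_subgroup[OF Ms _ q] by (auto simp: Mq_def)
  ultimately have "Mq = M" using M by (auto simp: minimal_normal_def Mq_def)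
  then show ?thesis using \<open>x \<in> M\<close> by (auto simp: Mq_def)
qed

lemma minimal_normal_solvable_card:
  assumes fin: "finite (carrier G)" and "solvable G" and M: "minimal_normal M G"
  obtains q k where "Factorial_Ring.prime q" "card M = q ^ k"
proof -
  have Ms: "subgroup M G" and "M \<noteq> {\<one>}"
    using M normal_imp_subgroup by (auto simp: minimal_normal_def)
  have Mc: "M \<subseteq> carrier G" using subgroup.subset[OF Ms] .
  have "finite M" using fin Mc finite_subset by blast
  then have "card M \<noteq> 0" using subgroup.one_closed[OF Ms] by auto
  have "card M \<noteq> 1"
    using \<open>M \<noteq> {\<one>}\<close> subgroup.one_closed[OF Ms] by (auto simp: card_1_singleton_iff)
  then obtain q where q: "Factorial_Ring.prime q" "q dvd card M" using prime_factor_nat by blast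
  have only_q: "r = q" if r: "Factorial_Ring.prime r" "r dvd card M" for r
  proof -
    obtain y where y: "y \<in> M" "y \<noteq> \<one>" "y [^] r = \<one>"
      using cauchy_theorem_subgroup[OF Ms \<open>finite M\<close> r] by blast
    have yc: "y \<in> carrier G" using y Mc by auto
    have "y [^] q = \<one>" using minimal_normal_solvable_pow_prime[OF assms q y(1)] .
    then have "ord y dvd q" "ord y dvd r" using y(3) pow_eq_id[OF yc] by auto
    moreover have "ord y \<noteq> 1" using ord_eq_1[OF yc] y(2) by simp
    ultimately show ?thesis using q(1) r(1) by (metis prime_nat_iff)
  qed
  have "prime_factors (card M) = {q}"
  proof
    show "prime_factors (card M) \<subseteq> {q}"
      using only_q by (auto simp: prime_factors_dvd[OF \<open>card M \<noteq> 0\<close>])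
    show "{q} \<subseteq> prime_factors (card M)"
      using q by (simp add: prime_factors_dvd[OF \<open>card M \<noteq> 0\<close>])
  qed
  then have "card M = q ^ multiplicity q (card M)"
    using prime_factorization_nat[of "card M"] \<open>card M \<noteq> 0\<close> by simp
  then show ?thesis using that q(1) by blast
qed

lemma exists_minimal_normal:
  assumes "finite (carrier G)" and "carrier G \<noteq> {\<one>}"
  obtains L where "minimal_normal L G"
proof -
  define P where "P K \<longleftrightarrow> K \<lhd> G \<and> K \<noteq> {\<one>}" for K
  have "P (carrier G)" using assms(2) normal_self by (simp add: P_def)
  then obtain L where L: "P L" and least: "\<And>K. P K \<Longrightarrow> card L \<le> card K"
    using ex_has_least_nat[of P "carrier G" card] by blast
  have "L \<subseteq> carrier G" using L subgroup.subset[OF normal_imp_subgroup] unfolding P_def by blast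
  then have "finite L" using assms(1) finite_subset by blast
  have "K = {\<one>} \<or> K = L" if K: "K \<lhd> G" "K \<subseteq> L" for K
  proof (cases "K = {\<one>}")
    case False
    then have "card L \<le> card K" using least K(1) unfolding P_def by blast
    moreover have "card K \<le> card L" using card_mono[OF \<open>finite L\<close> K(2)] .
    ultimately show ?thesis using card_subset_eq[OF \<open>finite L\<close> K(2)] by simp
  qed simp
  then show ?thesis using L that unfolding P_def minimal_normal_def by blast
qed

lemma solvable_subgroup_group:
  assumes "subgroup H G" and "solvable G" shows "solvable (G\<lparr>carrier := H\<rparr>)"
proof -
  have "group_hom (G\<lparr>carrier := H\<rparr>) G id"
    using subgroup_imp_group[OF assms(1)] subgroup.subset[OF assms(1)]
    by (auto simp: group_hom_def group_hom_axioms_def hom_def is_group)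
  then show ?thesis using group_hom.inj_hom_imp_solvable assms(2) by fastforce
qed

lemma socle_eq_unique_minimal_normal:
  assumes "minimal_normal N G" and "\<And>K. minimal_normal K G \<Longrightarrow> K = N"
  shows "socle G = N"
proof -
  have "{K. minimal_normal K G} = {N}" using assms by blast
  moreover have "subgroup N G" using assms(1) normal_imp_subgroup by (auto simp: minimal_normal_def)
  then have "generate G N = N"
    using generate_subgroup_incl[OF subset_refl] generate.incl[of _ N G] by blast
  ultimately show ?thesis unfolding socle_def by simp
qed

end

section \<open>Products, conjugates and complements\<close>

lemma mem_set_mult_iff: "x \<in> A <#>\<^bsub>G\<^esub> B \<longleftrightarrow> (\<exists>a\<in>A. \<exists>b\<in>B. x = a \<otimes>\<^bsub>G\<^esub> b)"
  by (auto simp: set_mult_def)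

definition complement :: "('a, 'b) monoid_scheme \<Rightarrow> 'a set \<Rightarrow> 'a set \<Rightarrow> bool" where
  "complement G W N \<longleftrightarrow> subgroup W G \<and> W <#>\<^bsub>G\<^esub> N = carrier G \<and> W \<inter> N = {\<one>\<^bsub>G\<^esub>}"

context group
begin

lemma set_mult_subgroup_left:
  assumes "subgroup A G" "subgroup B G" shows "A \<subseteq> A <#> B"
proof
  fix a assume "a \<in> A"
  then have "a = a \<otimes> \<one>" using subgroup.mem_carrier[OF assms(1)] by simp
  then show "a \<in> A <#> B"
    using \<open>a \<in> A\<close> subgroup.one_closed[OF assms(2)] unfolding mem_set_mult_iff by blast
qed

lemma set_mult_subgroup_right:
  assumes "subgroup A G" "subgroup B G" shows "B \<subseteq> A <#> B"
proof
  fix b assume "b \<in> B"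
  then have "b = \<one> \<otimes> b" using subgroup.mem_carrier[OF assms(2)] by simp
  then show "b \<in> A <#> B"
    using \<open>b \<in> B\<close> subgroup.one_closed[OF assms(1)] unfolding mem_set_mult_iff by blast
qed

lemma subgroup_set_mult_normal:
  assumes "subgroup S G" and "N \<lhd> G" shows "subgroup (S <#> N) G"
  using commut_normal[OF assms] assms second_isomorphism_grp.normal_set_mult_subgroup[of N G S]
  unfolding second_isomorphism_grp_def second_isomorphism_grp_axioms_def by simp

lemma card_set_mult:
  assumes "subgroup A G" "subgroup B G" and "A \<inter> B \<subseteq> {\<one>}"
  shows "card (A <#> B) = card A * card B"
proof -
  interpret group_disjoint_sum G A B
    using assms by (simp add: group_disjoint_sum_def is_group)
  have "inj_on (\<lambda>(a, b). a \<otimes> b) (A \<times> B)"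
    using assms(3) cancel by (auto intro: inj_onI)
  moreover have "A <#> B = (\<lambda>(a, b). a \<otimes> b) ` (A \<times> B)" by (auto simp: set_mult_def)
  ultimately show ?thesis by (simp add: card_image card_cartesian_product)
qed

lemma dedekind_modular_law:
  assumes W: "subgroup W G" and K: "subgroup K G" and N: "subgroup N G" and "N \<subseteq> K"
  shows "(W \<inter> K) <#> N = (W <#> N) \<inter> K"
proof
  show "(W \<inter> K) <#> N \<subseteq> (W <#> N) \<inter> K"
    using \<open>N \<subseteq> K\<close> subgroup.m_closed[OF K] by (auto simp: mem_set_mult_iff) blast+
  show "(W <#> N) \<inter> K \<subseteq> (W \<inter> K) <#> N"
  proof
    fix y assume "y \<in> (W <#> N) \<inter> K"
    then obtain x v where xv: "x \<in> W" "v \<in> N" "y = x \<otimes> v" "y \<in> K"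
      by (auto simp: mem_set_mult_iff)
    have "x = y \<otimes> inv v"
      using xv subgroup.mem_carrier[OF W] subgroup.mem_carrier[OF N] by (simp add: m_assoc)
    moreover have "y \<otimes> inv v \<in> K"
      using xv \<open>N \<subseteq> K\<close> subgroup.m_closed[OF K] subgroup.m_inv_closed[OF K] by blast
    ultimately have "x \<in> K" by simp
    then show "y \<in> (W \<inter> K) <#> N" using xv by (auto simp: mem_set_mult_iff)
  qed
qed

lemma normal_invI_factorization:
  assumes S: "subgroup S G" and A: "A \<subseteq> carrier G" and B: "B \<subseteq> carrier G"
    and factor: "carrier G \<subseteq> A <#> B"
    and inv_A: "\<And>a s. a \<in> A \<Longrightarrow> s \<in> S \<Longrightarrow> a \<otimes> s \<otimes> inv a \<in> S"
    and inv_B: "\<And>b s. b \<in> B \<Longrightarrow> s \<in> S \<Longrightarrow> b \<otimes> s \<otimes> inv b \<in> S"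
  shows "S \<lhd> G"
proof (rule normal_invI[OF S])
  fix g s assume g: "g \<in> carrier G" and s: "s \<in> S"
  have "g \<in> A <#> B" using factor g by blast
  then obtain a b where ab: "a \<in> A" "b \<in> B" "g = a \<otimes> b" unfolding mem_set_mult_iff by blast
  have "a \<in> carrier G" "b \<in> carrier G" "s \<in> carrier G"
    using ab A B s subgroup.mem_carrier[OF S] by auto
  then have "g \<otimes> s \<otimes> inv g = a \<otimes> (b \<otimes> s \<otimes> inv b) \<otimes> inv a"
    using ab(3) by (simp add: m_assoc inv_mult_group)
  then show "g \<otimes> s \<otimes> inv g \<in> S" using inv_A[OF ab(1) inv_B[OF ab(2) s]] by simp
qed

lemma mem_core_iff: "x \<in> core H G \<longleftrightarrow> (\<forall>g\<in>carrier G. \<exists>a\<in>H. x = g \<otimes> a \<otimes> inv g)"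
  unfolding core_def l_coset_def r_coset_def by auto

lemma normal_subset_core:
  assumes K: "K \<lhd> G" and "K \<subseteq> H" shows "K \<subseteq> core H G"
proof
  fix x assume x: "x \<in> K"
  show "x \<in> core H G" unfolding mem_core_iff
  proof
    fix g assume g: "g \<in> carrier G"
    have "x \<in> carrier G" using x subgroup.mem_carrier[OF normal_imp_subgroup[OF K]] by blast
    then have "x = g \<otimes> (inv g \<otimes> x \<otimes> g) \<otimes> inv g" using g by (simp add: m_assoc)
    moreover have "inv g \<otimes> x \<otimes> g \<in> H" using normal.inv_op_closed1[OF K g x] \<open>K \<subseteq> H\<close> by blast
    ultimately show "\<exists>a\<in>H. x = g \<otimes> a \<otimes> inv g" by blast
  qed
qed

lemma conj_coset_eq_image:
  assumes "S \<subseteq> carrier G" "g \<in> carrier G"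
  shows "g <# S #> inv g = (\<lambda>x. g \<otimes> x \<otimes> inv g) ` S"
  using assms by (auto simp: l_coset_def r_coset_def)

lemma card_conj_coset:
  assumes "S \<subseteq> carrier G" "g \<in> carrier G"
  shows "card (g <# S #> inv g) = card S"
proof -
  have "inj_on (\<lambda>x. g \<otimes> x \<otimes> inv g) S"
    using assms by (intro inj_onI) (auto dest: conjugation_is_inj)
  then show ?thesis using assms by (simp add: conj_coset_eq_image card_image)
qed

lemma mem_conj_coset_iff:
  assumes "S \<subseteq> carrier G" "g \<in> carrier G" "x \<in> carrier G"
  shows "x \<in> g <# S #> inv g \<longleftrightarrow> inv g \<otimes> x \<otimes> g \<in> S"
proof -
  have "x = g \<otimes> s \<otimes> inv g \<longleftrightarrow> inv g \<otimes> x \<otimes> g = s" if "s \<in> S" for s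
    using assms that by (auto simp: m_assoc)
  then show ?thesis using conj_coset_eq_image[OF assms(1,2)] by auto
qed

lemma conj_coset_inv_cancel:
  assumes S: "S \<subseteq> carrier G" and g: "g \<in> carrier G"
  shows "inv g <# (g <# S #> inv g) #> inv (inv g) = S"
proof -
  have gS: "g <# S #> inv g = (\<lambda>x. g \<otimes> x \<otimes> inv g) ` S" using conj_coset_eq_image[OF S g] .
  then have "g <# S #> inv g \<subseteq> carrier G" using S g by auto
  then have "inv g <# (g <# S #> inv g) #> inv (inv g) =
             (\<lambda>y. inv g \<otimes> y \<otimes> inv (inv g)) ` (\<lambda>x. g \<otimes> x \<otimes> inv g) ` S"
    using conj_coset_eq_image[of _ "inv g"] g gS by simp
  also have "\<dots> = (\<lambda>x. x) ` S"
    unfolding image_image using S g by (intro image_cong) (auto simp: m_assoc)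
  finally show ?thesis by simp
qed

lemma conj_eq_iff_commute:
  assumes "x \<in> carrier G" "e \<in> carrier G"
  shows "inv x \<otimes> e \<otimes> x = e \<longleftrightarrow> x \<otimes> e = e \<otimes> x"
  using assms by (metis inv_closed m_assoc m_closed mult_inv_cancel_left)

lemma normalI_conj_coset:
  assumes "subgroup L G" and conj: "\<And>g. g \<in> carrier G \<Longrightarrow> g <# L #> inv g = L"
  shows "L \<lhd> G"
proof (rule normalI[OF assms(1)], intro ballI)
  fix g assume g: "g \<in> carrier G"
  have "L #> g = (g <# L #> inv g) #> g" using conj[OF g] by simp
  also have "\<dots> = g <# L"
    using g subgroup.subset[OF assms(1)] l_coset_subset_G by (simp add: coset_mult_assoc)
  finally show "L #> g = g <# L" .
qed

lemma mem_normalizer_iff: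
  assumes "L \<subseteq> carrier G"
  shows "g \<in> normalizer G L \<longleftrightarrow> g \<in> carrier G \<and> g <# L #> inv g = L"
  using assms by (simp add: normalizer_def stabilizer_def)

lemma subgroup_centralizer_in:
  assumes N: "subgroup N G" and L: "L \<subseteq> carrier G"
  shows "subgroup {v \<in> N. \<forall>x \<in> L. x \<otimes> v = v \<otimes> x} G" (is "subgroup ?C G")
proof (rule subgroupI)
  show "?C \<subseteq> carrier G" using subgroup.subset[OF N] by blast
  have "\<one> \<in> ?C" using subgroup.one_closed[OF N] L by auto
  then show "?C \<noteq> {}" by blast
  show "inv v \<in> ?C" if v: "v \<in> ?C" for v
  proof -
    have "x \<otimes> inv v = inv v \<otimes> x" if x: "x \<in> L" for x
    proof -
      have "x \<in> carrier G" "v \<in> carrier G" using x v L subgroup.subset[OF N] by auto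
      moreover have "inv v \<otimes> (x \<otimes> v) \<otimes> inv v = inv v \<otimes> (v \<otimes> x) \<otimes> inv v" using v x by simp
      ultimately show ?thesis by (simp add: m_assoc)
    qed
    then show ?thesis using v subgroup.m_inv_closed[OF N] by simp
  qed
  show "v \<otimes> w \<in> ?C" if v: "v \<in> ?C" and w: "w \<in> ?C" for v w
  proof -
    have "x \<otimes> (v \<otimes> w) = v \<otimes> w \<otimes> x" if x: "x \<in> L" for x
    proof -
      have c: "x \<in> carrier G" "v \<in> carrier G" "w \<in> carrier G"
        using x v w L subgroup.subset[OF N] by auto
      have "x \<otimes> (v \<otimes> w) = v \<otimes> x \<otimes> w" using x v c by (simp add: m_assoc[symmetric])
      also have "\<dots> = v \<otimes> w \<otimes> x" using x w c by (simp add: m_assoc)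
      finally show ?thesis .
    qed
    then show ?thesis using v w subgroup.m_closed[OF N] by simp
  qed
qed

lemma conj_coset_supplement:
  assumes N: "N \<lhd> G" and g: "g \<in> carrier G" and Wc: "W \<subseteq> carrier G"
    and WN: "W <#> N = carrier G"
  shows "(g <# W #> inv g) <#> N = carrier G"
proof
  have Nc: "N \<subseteq> carrier G" using subgroup.subset[OF normal_imp_subgroup[OF N]] .
  have "g <# W #> inv g \<subseteq> carrier G" using conj_coset_eq_image[OF Wc g] Wc g by auto
  then show "(g <# W #> inv g) <#> N \<subseteq> carrier G" using setmult_subset_G[OF _ Nc] by blast
  show "carrier G \<subseteq> (g <# W #> inv g) <#> N"
  proof
    fix y assume y: "y \<in> carrier G"
    then have "inv g \<otimes> y \<otimes> g \<in> W <#> N" using WN g by simp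
    then obtain w n where wn: "w \<in> W" "n \<in> N" "inv g \<otimes> y \<otimes> g = w \<otimes> n"
      unfolding mem_set_mult_iff by blast
    have "w \<in> carrier G" "n \<in> carrier G" using wn Wc Nc by auto
    have "y = g \<otimes> (inv g \<otimes> y \<otimes> g) \<otimes> inv g" using y g by (simp add: m_assoc)
    also have "\<dots> = (g \<otimes> w \<otimes> inv g) \<otimes> (g \<otimes> n \<otimes> inv g)"
      using wn(3) g \<open>w \<in> carrier G\<close> \<open>n \<in> carrier G\<close> by (simp add: m_assoc)
    finally have "y = (g \<otimes> w \<otimes> inv g) \<otimes> (g \<otimes> n \<otimes> inv g)" .
    moreover have "g \<otimes> w \<otimes> inv g \<in> g <# W #> inv g"
      unfolding conj_coset_eq_image[OF Wc g] using wn(1) by (rule imageI)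
    moreover have "g \<otimes> n \<otimes> inv g \<in> N" using normal.inv_op_closed2[OF N g wn(2)] .
    ultimately show "y \<in> (g <# W #> inv g) <#> N" unfolding mem_set_mult_iff by blast
  qed
qed

lemma complement_conj:
  assumes W: "complement G W N" and N: "N \<lhd> G" and g: "g \<in> carrier G"
  shows "complement G (g <# W #> inv g) N"
proof -
  have Ws: "subgroup W G" and WN: "W <#> N = carrier G" and WN1: "W \<inter> N = {\<one>}"
    using W by (auto simp: complement_def)
  have Wc: "W \<subseteq> carrier G" using subgroup.subset[OF Ws] .
  have Ws': "subgroup (g <# W #> inv g) G" using subgroup_conjugation_is_surj2[OF g Ws] .
  have "x = \<one>" if x: "x \<in> g <# W #> inv g" "x \<in> N" for x
  proof -
    obtain w where w: "w \<in> W" "x = g \<otimes> w \<otimes> inv g"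
      using x(1) unfolding conj_coset_eq_image[OF Wc g] by blast
    have "w \<in> carrier G" using w(1) Wc by auto
    then have "w = inv g \<otimes> x \<otimes> g" using w(2) g by (simp add: m_assoc)
    then have "w \<in> W \<inter> N" using w(1) normal.inv_op_closed1[OF N g x(2)] by simp
    then have "w = \<one>" using WN1 by blast
    then show ?thesis using w(2) g by simp
  qed
  then have "(g <# W #> inv g) \<inter> N = {\<one>}"
    using subgroup.one_closed[OF Ws'] subgroup.one_closed[OF normal_imp_subgroup[OF N]] by blast
  then show ?thesis
    using Ws' conj_coset_supplement[OF N g Wc WN] unfolding complement_def by (intro conjI)
qed

lemma complement_Int_set_mult_subset:
  assumes W: "complement G W N" and L: "subgroup L G" "L \<subseteq> W" and N: "subgroup N G"
  shows "W \<inter> (L <#> N) \<subseteq> L"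
proof
  have Ws: "subgroup W G" and WN1: "W \<inter> N = {\<one>}" using W by (auto simp: complement_def)
  fix x assume "x \<in> W \<inter> (L <#> N)"
  then obtain l n where x: "x \<in> W" and ln: "l \<in> L" "n \<in> N" "x = l \<otimes> n"
    unfolding Int_iff mem_set_mult_iff by blast
  have "l \<in> carrier G" "n \<in> carrier G"
    using ln subgroup.mem_carrier[OF L(1)] subgroup.mem_carrier[OF N] by auto
  then have "n = inv l \<otimes> x" using ln(3) by simp
  moreover have "inv l \<otimes> x \<in> W"
    using x ln(1) L(2) subgroup.m_closed[OF Ws] subgroup.m_inv_closed[OF Ws] by blast
  ultimately have "n = \<one>" using ln(2) WN1 by blast
  then show "x \<in> L" using ln \<open>l \<in> carrier G\<close> by simp
qed

end

section \<open>Primitive soluble groups\<close>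

(* N need not be the unique minimal normal subgroup here: uniqueness only serves to identify N
   with the socle in the final theorem. *)
locale primitive_solvable_group = group G for G (structure) +
  fixes N H
  assumes finite_carrier: "finite (carrier G)"
    and solvable: "solvable G"
    and minimal_normal_N: "minimal_normal N G"
    and maximal_subgroup_H: "maximal_subgroup H G"
    and core_free_H: "core_free H G"
begin

lemma N_normal: "N \<lhd> G"
  using minimal_normal_N by (simp add: minimal_normal_def)

lemma N_subgroup: "subgroup N G"
  using normal_imp_subgroup[OF N_normal] .

lemma N_nontrivial: "N \<noteq> {\<one>}"
  using minimal_normal_N by (simp add: minimal_normal_def)

lemma N_minimal: "K \<lhd> G \<Longrightarrow> K \<subseteq> N \<Longrightarrow> K = {\<one>} \<or> K = N"
  using minimal_normal_N by (simp add: minimal_normal_def)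

lemma N_commute: "x \<in> N \<Longrightarrow> y \<in> N \<Longrightarrow> x \<otimes> y = y \<otimes> x"
  using minimal_normal_solvable_commute[OF solvable minimal_normal_N] .

lemma H_subgroup: "subgroup H G"
  using maximal_subgroup_H by (simp add: maximal_subgroup_def)

lemma H_maximal: "subgroup K G \<Longrightarrow> H \<subseteq> K \<Longrightarrow> K = H \<or> K = carrier G"
  using maximal_subgroup_H by (simp add: maximal_subgroup_def)

lemma normal_subset_H_trivial:
  assumes "K \<lhd> G" "K \<subseteq> H" shows "K = {\<one>}"
  using normal_subset_core[OF assms] core_free_H subgroup.one_closed[OF normal_imp_subgroup[OF assms(1)]]
  by (auto simp: core_free_def)

lemma proper_supplement_Int_N:
  assumes S: "subgroup S G" and SN: "S <#> N = carrier G" and "S \<noteq> carrier G"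
  shows "S \<inter> N = {\<one>}"
proof -
  have "S \<inter> N \<lhd> G"
  proof (rule normal_invI_factorization[OF subgroups_Inter_pair[OF S N_subgroup]])
    show "a \<otimes> x \<otimes> inv a \<in> S \<inter> N" if "a \<in> S" "x \<in> S \<inter> N" for a x
      using that subgroup.mem_carrier[OF S] normal.inv_op_closed2[OF N_normal]
        subgroup.m_closed[OF S] subgroup.m_inv_closed[OF S] by auto
    show "b \<otimes> x \<otimes> inv b \<in> S \<inter> N" if "b \<in> N" "x \<in> S \<inter> N" for b x
      using that N_commute[of b x] subgroup.mem_carrier[OF N_subgroup] by (simp add: m_assoc)
  qed (use SN subgroup.subset[OF S] subgroup.subset[OF N_subgroup] in auto)
  moreover have "N \<noteq> S \<inter> N"
  proof
    assume "N = S \<inter> N"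
    then have "S <#> N \<subseteq> S" using subgroup.m_closed[OF S] by (auto simp: mem_set_mult_iff) blast
    then show False using SN \<open>S \<noteq> carrier G\<close> subgroup.subset[OF S] by blast
  qed
  ultimately show ?thesis using N_minimal by blast
qed

lemma H_set_mult_N: "H <#> N = carrier G"
proof -
  have "subgroup (H <#> N) G" using subgroup_set_mult_normal[OF H_subgroup N_normal] .
  moreover have "H \<subseteq> H <#> N" using set_mult_subgroup_left[OF H_subgroup N_subgroup] .
  moreover have "\<not> N \<subseteq> H" using normal_subset_H_trivial[OF N_normal] N_nontrivial by blast
  then have "H <#> N \<noteq> H" using set_mult_subgroup_right[OF H_subgroup N_subgroup] by blast
  ultimately show ?thesis using H_maximal by blast
qed

lemma H_Int_N: "H \<inter> N = {\<one>}"
  using proper_supplement_Int_N[OF H_subgroup H_set_mult_N] maximal_subgroup_H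
  by (simp add: maximal_subgroup_def)

lemma card_carrier: "card (carrier G) = card H * card N"
  using card_set_mult[OF H_subgroup N_subgroup] H_Int_N H_set_mult_N by simp

lemma normal_subgroup_of_H_subgroup:
  assumes "L \<lhd> G\<lparr>carrier := H\<rparr>" shows "subgroup L G" "L \<subseteq> H"
  using incl_subgroup[OF H_subgroup normal_imp_subgroup[OF assms]]
    subgroup.subset[OF normal_imp_subgroup[OF assms]] by auto

lemma normal_subgroup_of_H_conj_closed:
  assumes L: "L \<lhd> G\<lparr>carrier := H\<rparr>" and "a \<in> H" "x \<in> L"
  shows "a \<otimes> x \<otimes> inv a \<in> L"
  using normal.inv_op_closed2[OF L] assms(2,3) m_inv_consistent[OF H_subgroup] by simp

lemma normalizer_normal_subgroup_of_H:
  assumes L: "L \<lhd> G\<lparr>carrier := H\<rparr>" and "L \<noteq> {\<one>}"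
  shows "normalizer G L = H"
proof -
  have Ls: "subgroup L G" and LH: "L \<subseteq> H" using normal_subgroup_of_H_subgroup[OF L] .
  have Lc: "L \<subseteq> carrier G" using subgroup.subset[OF Ls] .
  have "H \<subseteq> normalizer G L"
    using subgroup.subset[OF normal_imp_subgroup_normalizer[OF H_subgroup L]] by simp
  moreover have "normalizer G L \<noteq> carrier G"
  proof
    assume eq: "normalizer G L = carrier G"
    have "L \<lhd> G"
    proof (rule normalI_conj_coset[OF Ls])
      fix g assume "g \<in> carrier G"
      then show "g <# L #> inv g = L" using eq mem_normalizer_iff[OF Lc] by blast
    qed
    then show False using normal_subset_H_trivial LH \<open>L \<noteq> {\<one>}\<close> by blast
  qed
  ultimately show ?thesis using H_maximal[OF normalizer_imp_subgroup[OF Lc]] by blast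
qed

lemma normal_subgroup_of_H_set_mult_N_normal:
  assumes L: "L \<lhd> G\<lparr>carrier := H\<rparr>" shows "L <#> N \<lhd> G"
proof -
  have Ls: "subgroup L G" using normal_subgroup_of_H_subgroup[OF L] by blast
  have Lc: "L \<subseteq> carrier G" and Nc: "N \<subseteq> carrier G" and Hc: "H \<subseteq> carrier G"
    using subgroup.subset[OF Ls] subgroup.subset[OF N_subgroup] subgroup.subset[OF H_subgroup] .
  show ?thesis
  proof (rule normal_invI_factorization[OF subgroup_set_mult_normal[OF Ls N_normal] Hc Nc])
    show "a \<otimes> s \<otimes> inv a \<in> L <#> N" if a: "a \<in> H" and s: "s \<in> L <#> N" for a s
    proof -
      obtain l n where ln: "l \<in> L" "n \<in> N" "s = l \<otimes> n" using s unfolding mem_set_mult_iff by blast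
      have c: "a \<in> carrier G" "l \<in> carrier G" "n \<in> carrier G" using a ln Hc Lc Nc by auto
      have "a \<otimes> s \<otimes> inv a = (a \<otimes> l \<otimes> inv a) \<otimes> (a \<otimes> n \<otimes> inv a)"
        using ln(3) c by (simp add: m_assoc)
      moreover have "a \<otimes> l \<otimes> inv a \<in> L" using normal_subgroup_of_H_conj_closed[OF L a ln(1)] .
      moreover have "a \<otimes> n \<otimes> inv a \<in> N" using normal.inv_op_closed2[OF N_normal c(1) ln(2)] .
      ultimately show ?thesis unfolding mem_set_mult_iff by blast
    qed
    show "b \<otimes> s \<otimes> inv b \<in> L <#> N" if b: "b \<in> N" and s: "s \<in> L <#> N" for b s
    proof -
      obtain l n where ln: "l \<in> L" "n \<in> N" "s = l \<otimes> n" using s unfolding mem_set_mult_iff by blast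
      have c: "b \<in> carrier G" "l \<in> carrier G" "n \<in> carrier G" using b ln Nc Lc by auto
      have "b \<otimes> s \<otimes> inv b = l \<otimes> ((inv l \<otimes> b \<otimes> l) \<otimes> n \<otimes> inv b)"
        using ln(3) c by (simp add: m_assoc)
      moreover have "inv l \<otimes> b \<otimes> l \<in> N" using normal.inv_op_closed1[OF N_normal c(2) b] .
      then have "(inv l \<otimes> b \<otimes> l) \<otimes> n \<otimes> inv b \<in> N"
        using subgroup.m_closed[OF N_subgroup] subgroup.m_inv_closed[OF N_subgroup] ln(2) b by simp
      ultimately show ?thesis using ln(1) unfolding mem_set_mult_iff by blast
    qed
  qed (use H_set_mult_N in simp)
qed

lemma normal_subgroup_of_H_centralizing_N_trivial:
  assumes L: "L \<lhd> G\<lparr>carrier := H\<rparr>" and central: "\<And>x v. x \<in> L \<Longrightarrow> v \<in> N \<Longrightarrow> x \<otimes> v = v \<otimes> x"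
  shows "L = {\<one>}"
proof -
  have Ls: "subgroup L G" and LH: "L \<subseteq> H" using normal_subgroup_of_H_subgroup[OF L] .
  have "L \<lhd> G"
  proof (rule normal_invI_factorization[OF Ls subgroup.subset[OF H_subgroup]
        subgroup.subset[OF N_subgroup]])
    show "b \<otimes> x \<otimes> inv b \<in> L" if "b \<in> N" "x \<in> L" for b x
      using that central[of x b, symmetric] subgroup.mem_carrier[OF N_subgroup] subgroup.mem_carrier[OF Ls]
      by (simp add: m_assoc)
  qed (use H_set_mult_N normal_subgroup_of_H_conj_closed[OF L] in auto)
  then show ?thesis using normal_subset_H_trivial LH by blast
qed

lemma conj_centralizer_in_N:
  assumes L: "L \<lhd> G\<lparr>carrier := H\<rparr>" and a: "a \<in> H"
    and v: "v \<in> N" "\<forall>y \<in> L. y \<otimes> v = v \<otimes> y" and x: "x \<in> L"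
  shows "x \<otimes> (a \<otimes> v \<otimes> inv a) = a \<otimes> v \<otimes> inv a \<otimes> x"
proof -
  have Ls: "subgroup L G" using normal_subgroup_of_H_subgroup[OF L] by blast
  have c: "a \<in> carrier G" "v \<in> carrier G"
    using a v subgroup.mem_carrier[OF H_subgroup] subgroup.mem_carrier[OF N_subgroup] by auto
  define y where "y = inv a \<otimes> x \<otimes> inv (inv a)"
  have "y \<in> L"
    unfolding y_def using normal_subgroup_of_H_conj_closed[OF L _ x] a
      subgroup.m_inv_closed[OF H_subgroup] by blast
  then have yc: "y \<in> carrier G" and yv: "y \<otimes> v = v \<otimes> y"
    using v subgroup.mem_carrier[OF Ls] by auto
  have "x = a \<otimes> y \<otimes> inv a"
    unfolding y_def using c x subgroup.mem_carrier[OF Ls] by (simp add: m_assoc)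
  then have "x \<otimes> (a \<otimes> v \<otimes> inv a) = a \<otimes> (y \<otimes> v) \<otimes> inv a" using c yc by (simp add: m_assoc)
  also have "\<dots> = a \<otimes> v \<otimes> inv a \<otimes> (a \<otimes> y \<otimes> inv a)" using c yc yv by (simp add: m_assoc)
  finally show ?thesis using \<open>x = a \<otimes> y \<otimes> inv a\<close> by simp
qed

lemma centralizer_in_N_trivial:
  assumes L: "L \<lhd> G\<lparr>carrier := H\<rparr>" and "L \<noteq> {\<one>}"
  shows "{v \<in> N. \<forall>x \<in> L. x \<otimes> v = v \<otimes> x} = {\<one>}" (is "?C = _")
proof -
  have Ls: "subgroup L G" using normal_subgroup_of_H_subgroup[OF L] by blast
  have Cs: "subgroup ?C G" using subgroup_centralizer_in[OF N_subgroup subgroup.subset[OF Ls]] .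
  have "?C \<lhd> G"
  proof (rule normal_invI_factorization[OF Cs subgroup.subset[OF H_subgroup]
        subgroup.subset[OF N_subgroup]])
    show "a \<otimes> v \<otimes> inv a \<in> ?C" if a: "a \<in> H" and v: "v \<in> ?C" for a v
      using conj_centralizer_in_N[OF L a] v normal.inv_op_closed2[OF N_normal]
        subgroup.mem_carrier[OF H_subgroup a] by simp
    show "b \<otimes> v \<otimes> inv b \<in> ?C" if "b \<in> N" "v \<in> ?C" for b v
      using that N_commute[of b v] subgroup.mem_carrier[OF N_subgroup] by (simp add: m_assoc)
  qed (use H_set_mult_N in simp)
  moreover have "?C \<noteq> N"
    using normal_subgroup_of_H_centralizing_N_trivial[OF L] \<open>L \<noteq> {\<one>}\<close> by blast
  ultimately show ?thesis using N_minimal by blast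
qed

lemma minimal_normal_subgroup_of_H_coprime:
  assumes L: "minimal_normal L (G\<lparr>carrier := H\<rparr>)"
  obtains q b where "Factorial_Ring.prime q" "card L = q ^ b" "\<not> q dvd card N"
proof -
  interpret H: group "G\<lparr>carrier := H\<rparr>" using subgroup_imp_group[OF H_subgroup] .
  have Ln: "L \<lhd> G\<lparr>carrier := H\<rparr>" and "L \<noteq> {\<one>}" using L by (auto simp: minimal_normal_def)
  have Ls: "subgroup L G" using normal_subgroup_of_H_subgroup[OF Ln] by blast
  have "finite H" using finite_carrier subgroup.subset[OF H_subgroup] finite_subset by blast
  then obtain q b where q: "Factorial_Ring.prime q" "card L = q ^ b"
    using H.minimal_normal_solvable_card[OF _ solvable_subgroup_group[OF H_subgroup solvable] L]
    by auto
  interpret L: group "G\<lparr>carrier := L\<rparr>" using subgroup_imp_group[OF Ls] .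
  have "card N mod q = card {e \<in> N. \<forall>x \<in> carrier (G\<lparr>carrier := L\<rparr>). inv x \<otimes> e \<otimes> x = e} mod q"
  proof (rule L.card_right_action_fixed_points_mod)
    show "finite N" using finite_carrier subgroup.subset[OF N_subgroup] finite_subset by blast
    show "order (G\<lparr>carrier := L\<rparr>) = q ^ b" using q(2) by (simp add: order_def)
  qed (use q(1) normal.inv_op_closed1[OF N_normal] subgroup.mem_carrier[OF Ls]
        subgroup.mem_carrier[OF N_subgroup] in \<open>auto simp: m_assoc inv_mult_group\<close>)
  also have "{e \<in> N. \<forall>x \<in> carrier (G\<lparr>carrier := L\<rparr>). inv x \<otimes> e \<otimes> x = e} =
             {v \<in> N. \<forall>x \<in> L. x \<otimes> v = v \<otimes> x}"
    using conj_eq_iff_commute subgroup.mem_carrier[OF Ls] subgroup.mem_carrier[OF N_subgroup] by auto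
  also have "\<dots> = {\<one>}" using centralizer_in_N_trivial[OF Ln \<open>L \<noteq> {\<one>}\<close>] .
  finally have "card N mod q = 1 mod q" by simp
  then have "\<not> q dvd card N" using q(1) by (auto simp: dvd_eq_mod_eq_0 prime_gt_1_nat)
  then show ?thesis using that q by blast
qed

subsection \<open>Complements of the minimal normal subgroup are conjugate\<close>

lemma inj_on_rcosets_N:
  assumes L: "subgroup L G" "L \<subseteq> H" shows "inj_on (\<lambda>v. L #> v) N"
proof (rule inj_onI)
  fix v w assume v: "v \<in> N" and w: "w \<in> N" and eq: "L #> v = L #> w"
  have Lc: "L \<subseteq> carrier G" and Nc: "N \<subseteq> carrier G"
    using subgroup.subset L(1) N_subgroup by auto
  have "v \<in> L #> w" using eq rcos_self[OF _ L(1)] v Nc by blast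
  then obtain l where l: "l \<in> L" "v = l \<otimes> w" by (auto simp: r_coset_def)
  moreover have "l \<in> carrier G" "w \<in> carrier G" using l(1) w Lc Nc by auto
  ultimately have "l = v \<otimes> inv w" by (simp add: m_assoc)
  then have "l \<in> H \<inter> N"
    using l(1) L(2) v w subgroup.m_closed[OF N_subgroup] subgroup.m_inv_closed[OF N_subgroup] by auto
  then show "v = w" using H_Int_N l(2) Nc w by auto
qed

lemma rcoset_mult_in_rcosets_N:
  assumes L: "subgroup L G" and v: "v \<in> N" and x: "x \<in> L <#> N"
  shows "L #> v #> x \<in> (\<lambda>w. L #> w) ` N"
proof -
  have LN: "subgroup (L <#> N) G" using subgroup_set_mult_normal[OF L N_normal] .
  have Lc: "L \<subseteq> carrier G" and Nc: "N \<subseteq> carrier G"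
    using subgroup.subset L N_subgroup by auto
  have "v \<otimes> x \<in> L <#> N"
    using v x set_mult_subgroup_right[OF L N_subgroup] subgroup.m_closed[OF LN] by auto
  then obtain l w where lw: "l \<in> L" "w \<in> N" "v \<otimes> x = l \<otimes> w"
    unfolding mem_set_mult_iff by blast
  have "v \<in> carrier G" "x \<in> carrier G" using v x Nc subgroup.subset[OF LN] by auto
  then have "L #> v #> x = L #> (v \<otimes> x)" using Lc by (simp add: coset_mult_assoc)
  also have "\<dots> = L #> l #> w"
    using lw Lc Nc by (simp add: coset_mult_assoc subset_iff)
  also have "\<dots> = L #> w" using subgroup.rcos_const[OF L is_group lw(1)] by simp
  finally show ?thesis using lw(2) by simp
qed

lemma exists_coset_fixed_by_subgroup:
  assumes L: "subgroup L G" "L \<subseteq> H" and q: "Factorial_Ring.prime q" "\<not> q dvd card N"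
    and P: "subgroup P G" "P \<subseteq> L <#> N" "card P = q ^ b"
  obtains v where "v \<in> N" "\<And>x. x \<in> P \<Longrightarrow> L #> v #> x = L #> v"
proof -
  have Lc: "L \<subseteq> carrier G" and Nc: "N \<subseteq> carrier G" and Pc: "P \<subseteq> carrier G"
    using subgroup.subset L(1) N_subgroup P(1) by auto
  define E where "E = (\<lambda>v. L #> v) ` N"
  have E_carrier: "S \<subseteq> carrier G" if "S \<in> E" for S
    using that r_coset_subset_G[OF Lc] Nc unfolding E_def by blast
  interpret P: group "G\<lparr>carrier := P\<rparr>" using subgroup_imp_group[OF P(1)] .
  have "card E mod q = card {S \<in> E. \<forall>x \<in> carrier (G\<lparr>carrier := P\<rparr>). S #> x = S} mod q"
  proof (rule P.card_right_action_fixed_points_mod)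
    show "finite E" using finite_carrier Nc finite_subset by (auto simp: E_def)
    show "order (G\<lparr>carrier := P\<rparr>) = q ^ b" using P(3) by (simp add: order_def)
    show "S #> x \<in> E" if "S \<in> E" "x \<in> carrier (G\<lparr>carrier := P\<rparr>)" for S x
      using that rcoset_mult_in_rcosets_N[OF L(1)] P(2) unfolding E_def by auto
    show "S #> \<one>\<^bsub>G\<lparr>carrier := P\<rparr>\<^esub> = S" if "S \<in> E" for S
      using E_carrier[OF that] by simp
    show "S #> x #> y = S #> (x \<otimes>\<^bsub>G\<lparr>carrier := P\<rparr>\<^esub> y)"
      if "S \<in> E" "x \<in> carrier (G\<lparr>carrier := P\<rparr>)" "y \<in> carrier (G\<lparr>carrier := P\<rparr>)" for S x y
      using coset_mult_assoc[OF E_carrier[OF that(1)], of x y] that(2,3) Pc by auto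
  qed (rule q(1))
  moreover have "card E = card N" using inj_on_rcosets_N[OF L] by (simp add: E_def card_image)
  then have "card E mod q \<noteq> 0" using q(2) by (simp add: dvd_eq_mod_eq_0)
  ultimately have "card {S \<in> E. \<forall>x \<in> P. S #> x = S} \<noteq> 0" by (intro notI) simp
  then have "{S \<in> E. \<forall>x \<in> P. S #> x = S} \<noteq> {}" by (intro notI) simp
  then show ?thesis using that by (auto simp: E_def)
qed

lemma exists_N_conjugate_eq:
  assumes L: "subgroup L G" "L \<subseteq> H" "card L = q ^ b"
    and q: "Factorial_Ring.prime q" "\<not> q dvd card N"
    and P: "subgroup P G" "P \<subseteq> L <#> N" "card P = q ^ b"
  shows "\<exists>v\<in>N. v <# P #> inv v = L"
proof -
  obtain v where v: "v \<in> N" and fixed: "\<And>x. x \<in> P \<Longrightarrow> L #> v #> x = L #> v"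
    using exists_coset_fixed_by_subgroup[OF L(1,2) q P] by blast
  have Lc: "L \<subseteq> carrier G" and Pc: "P \<subseteq> carrier G" and vc: "v \<in> carrier G"
    using subgroup.subset L(1) P(1) v subgroup.mem_carrier[OF N_subgroup] by auto
  have "v \<otimes> x \<otimes> inv v \<in> L" if x: "x \<in> P" for x
  proof -
    have xc: "x \<in> carrier G" using x Pc by auto
    have "v \<otimes> x \<in> L #> (v \<otimes> x)" using rcos_self[OF _ L(1)] vc xc by simp
    also have "L #> (v \<otimes> x) = L #> v" using fixed[OF x] Lc vc xc by (simp add: coset_mult_assoc)
    finally obtain l where l: "l \<in> L" "v \<otimes> x = l \<otimes> v" by (auto simp: r_coset_def)
    moreover have "l \<in> carrier G" using l(1) Lc by auto
    ultimately have "v \<otimes> x \<otimes> inv v = l" using vc by (simp add: m_assoc)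
    then show ?thesis using l(1) by simp
  qed
  then have "v <# P #> inv v \<subseteq> L" using conj_coset_eq_image[OF Pc vc] by auto
  moreover have "card (v <# P #> inv v) = card L" using card_conj_coset[OF Pc vc] L(3) P(3) by simp
  moreover have "finite L" using finite_carrier Lc finite_subset by blast
  ultimately show ?thesis using v card_subset_eq by blast
qed

lemma card_complement:
  assumes "complement G W N" shows "card W = card H"
proof -
  have "subgroup W G" "W <#> N = carrier G" "W \<inter> N = {\<one>}"
    using assms by (auto simp: complement_def)
  then have "card (carrier G) = card W * card N" using card_set_mult[of W N] N_subgroup by simp
  then have "card W * card N = card H * card N" using card_carrier by linarith
  moreover have "finite N" using finite_carrier subgroup.subset[OF N_subgroup] finite_subset by blast
  then have "card N \<noteq> 0" using subgroup.one_closed[OF N_subgroup] by auto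
  ultimately show ?thesis by simp
qed

lemma card_complement_Int_set_mult_N:
  assumes W: "complement G W N" and L: "subgroup L G" "L \<subseteq> H"
  shows "card (W \<inter> (L <#> N)) = card L"
proof -
  have Ws: "subgroup W G" and WN: "W <#> N = carrier G" and WN1: "W \<inter> N = {\<one>}"
    using W by (auto simp: complement_def)
  have Ks: "subgroup (L <#> N) G" and NK: "N \<subseteq> L <#> N"
    using subgroup_set_mult_normal[OF L(1) N_normal] set_mult_subgroup_right[OF L(1) N_subgroup] .
  have "(W \<inter> (L <#> N)) <#> N = L <#> N"
    using dedekind_modular_law[OF Ws Ks N_subgroup NK] WN subgroup.subset[OF Ks] by auto
  moreover have "W \<inter> (L <#> N) \<inter> N \<subseteq> {\<one>}" "L \<inter> N \<subseteq> {\<one>}" using WN1 H_Int_N L(2) by blast+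
  ultimately have "card (L <#> N) = card (W \<inter> (L <#> N)) * card N" "card (L <#> N) = card L * card N"
    using card_set_mult[OF subgroups_Inter_pair[OF Ws Ks] N_subgroup] card_set_mult[OF L(1) N_subgroup]
    by simp_all
  then have "card (W \<inter> (L <#> N)) * card N = card L * card N" by linarith
  moreover have "card N \<noteq> 0"
    using finite_carrier subgroup.subset[OF N_subgroup] finite_subset subgroup.one_closed[OF N_subgroup]
    by (metis card_0_eq empty_iff)
  ultimately show ?thesis by simp
qed

lemma complement_eq_H_if_contains_normal_subgroup:
  assumes W: "complement G W N" and L: "L \<lhd> G\<lparr>carrier := H\<rparr>" "L \<noteq> {\<one>}" and "L \<subseteq> W"
  shows "W = H"
proof -
  have Ws: "subgroup W G" using W by (simp add: complement_def)
  have Ls: "subgroup L G" using normal_subgroup_of_H_subgroup[OF L(1)] by blast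
  have Lc: "L \<subseteq> carrier G" using subgroup.subset[OF Ls] .
  have "W \<subseteq> normalizer G L"
  proof
    fix x assume x: "x \<in> W"
    then have xc: "x \<in> carrier G" using subgroup.mem_carrier[OF Ws] by blast
    have "x \<otimes> l \<otimes> inv x \<in> L" if l: "l \<in> L" for l
    proof -
      have "x \<otimes> l \<otimes> inv x \<in> W"
        using x l \<open>L \<subseteq> W\<close> subgroup.m_closed[OF Ws] subgroup.m_inv_closed[OF Ws] by blast
      moreover have "l \<in> L <#> N" using l set_mult_subgroup_left[OF Ls N_subgroup] by blast
      then have "x \<otimes> l \<otimes> inv x \<in> L <#> N"
        using normal.inv_op_closed2[OF normal_subgroup_of_H_set_mult_N_normal[OF L(1)] xc] by blast
      ultimately show ?thesis
        using complement_Int_set_mult_subset[OF W Ls \<open>L \<subseteq> W\<close> N_subgroup] by blast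
    qed
    then have "x <# L #> inv x \<subseteq> L" using conj_coset_eq_image[OF Lc xc] by auto
    moreover have "finite L" using finite_carrier Lc finite_subset by blast
    ultimately have "x <# L #> inv x = L" using card_subset_eq card_conj_coset[OF Lc xc] by blast
    then show "x \<in> normalizer G L" using mem_normalizer_iff[OF Lc] xc by blast
  qed
  then have "W \<subseteq> H" using normalizer_normal_subgroup_of_H[OF L] by simp
  moreover have "finite H" using finite_carrier subgroup.subset[OF H_subgroup] finite_subset by blast
  ultimately show ?thesis using card_subset_eq card_complement[OF W] by blast
qed

lemma complement_N_conjugate_H:
  assumes W: "complement G W N" shows "\<exists>v\<in>N. W = v <# H #> inv v"
proof (cases "H = {\<one>}")
  case True
  have "subgroup W G" using W by (simp add: complement_def)
  then have "finite W" using finite_carrier subgroup.subset finite_subset by blast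
  then have "W = {\<one>}"
    using card_complement[OF W] True W subgroup.one_closed by (auto simp: complement_def card_1_singleton_iff)
  moreover have "\<one> <# H #> inv \<one> = H"
    using subgroup.subset[OF H_subgroup] by (simp add: lcos_mult_one)
  ultimately show ?thesis using True subgroup.one_closed[OF N_subgroup] by metis
next
  case False
  interpret H: group "G\<lparr>carrier := H\<rparr>" using subgroup_imp_group[OF H_subgroup] .
  have "finite H" using finite_carrier subgroup.subset[OF H_subgroup] finite_subset by blast
  then obtain L where L: "minimal_normal L (G\<lparr>carrier := H\<rparr>)"
    using H.exists_minimal_normal False by auto
  then have Ln: "L \<lhd> G\<lparr>carrier := H\<rparr>" and "L \<noteq> {\<one>}" by (auto simp: minimal_normal_def)
  have Ls: "subgroup L G" and LH: "L \<subseteq> H" using normal_subgroup_of_H_subgroup[OF Ln] .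
  obtain q b where q: "Factorial_Ring.prime q" "card L = q ^ b" "\<not> q dvd card N"
    using minimal_normal_subgroup_of_H_coprime[OF L] .
  have Ws: "subgroup W G" using W by (simp add: complement_def)
  have P: "subgroup (W \<inter> (L <#> N)) G"
    using subgroups_Inter_pair[OF Ws subgroup_set_mult_normal[OF Ls N_normal]] .
  obtain v where v: "v \<in> N" and conj: "v <# (W \<inter> (L <#> N)) #> inv v = L"
    using exists_N_conjugate_eq[OF Ls LH q(2) q(1,3) P Int_lower2]
      card_complement_Int_set_mult_N[OF W Ls LH] q(2) by auto
  have vc: "v \<in> carrier G" using v subgroup.mem_carrier[OF N_subgroup] by blast
  have Wc: "W \<subseteq> carrier G" using subgroup.subset[OF Ws] .
  have "L \<subseteq> v <# W #> inv v"
    using conj conj_coset_eq_image[OF Wc vc] conj_coset_eq_image[of "W \<inter> (L <#> N)" v] Wc vc by auto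
  then have "v <# W #> inv v = H"
    using complement_eq_H_if_contains_normal_subgroup[OF complement_conj[OF W N_normal vc] Ln
        \<open>L \<noteq> {\<one>}\<close>] by blast
  then have "W = inv v <# H #> inv (inv v)" using conj_coset_inv_cancel[OF Wc vc] by simp
  then show ?thesis using subgroup.m_inv_closed[OF N_subgroup v] by blast
qed

subsection \<open>Generating pairs\<close>

lemma mem_core_if_mem_N_conjugates:
  assumes x: "x \<in> carrier G" and conj: "\<And>v. v \<in> N \<Longrightarrow> x \<in> v <# H #> inv v"
  shows "x \<in> core H G"
proof -
  have Hc: "H \<subseteq> carrier G" and Nc: "N \<subseteq> carrier G"
    using subgroup.subset[OF H_subgroup] subgroup.subset[OF N_subgroup] .
  have "inv g \<otimes> x \<otimes> g \<in> H" if g: "g \<in> carrier G" for g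
  proof -
    have "g \<in> N <#> H" using g H_set_mult_N commut_normal[OF H_subgroup N_normal] by simp
    then obtain v a where va: "v \<in> N" "a \<in> H" "g = v \<otimes> a" unfolding mem_set_mult_iff by blast
    have c: "v \<in> carrier G" "a \<in> carrier G" using va Nc Hc by auto
    have "inv v \<otimes> x \<otimes> v \<in> H" using conj[OF va(1)] mem_conj_coset_iff[OF Hc c(1) x] by blast
    then have "inv a \<otimes> (inv v \<otimes> x \<otimes> v) \<otimes> a \<in> H"
      using va(2) subgroup.m_closed[OF H_subgroup] subgroup.m_inv_closed[OF H_subgroup] by blast
    then show ?thesis using va(3) c x by (simp add: m_assoc inv_mult_group)
  qed
  then have "x \<in> g <# H #> inv g" if "g \<in> carrier G" for g
    using that mem_conj_coset_iff[OF Hc that x] by blast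
  then show ?thesis unfolding core_def by blast
qed

lemma generating_pair_project:
  assumes h: "h \<in> H" and n: "n \<in> N" and y: "y \<in> carrier G"
    and gen: "generate G {h \<otimes> n, y} = carrier G"
  shows "\<exists>k\<in>H. generate G {h, k} = H"
proof -
  have Hc: "H \<subseteq> carrier G" and Nc: "N \<subseteq> carrier G"
    using subgroup.subset[OF H_subgroup] subgroup.subset[OF N_subgroup] .
  have "y \<in> H <#> N" using y H_set_mult_N by simp
  then obtain k m where k: "k \<in> H" "m \<in> N" "y = k \<otimes> m" unfolding mem_set_mult_iff by blast
  define L where "L = generate G {h, k}"
  have Ls: "subgroup L G" unfolding L_def using h k(1) Hc by (intro generate_is_subgroup) auto
  have LH: "L \<subseteq> H" unfolding L_def using h k(1) H_subgroup by (intro generate_subgroup_incl) auto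
  have "h \<in> L" "k \<in> L" unfolding L_def by (auto intro: generate.incl)
  then have "h \<otimes> n \<in> L <#> N" "y \<in> L <#> N" using n k unfolding mem_set_mult_iff by blast+
  then have "generate G {h \<otimes> n, y} \<subseteq> L <#> N"
    by (intro generate_subgroup_incl[OF _ subgroup_set_mult_normal[OF Ls N_normal]]) auto
  then have "carrier G \<subseteq> L <#> N" using gen by simp
  have "H \<subseteq> L"
  proof
    fix x assume x: "x \<in> H"
    then have "x \<in> L <#> N" using \<open>carrier G \<subseteq> L <#> N\<close> Hc by blast
    then obtain l v where lv: "l \<in> L" "v \<in> N" "x = l \<otimes> v" unfolding mem_set_mult_iff by blast
    have c: "l \<in> carrier G" "v \<in> carrier G" using lv LH Hc Nc by auto
    then have "v = inv l \<otimes> x" using lv(3) by simp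
    moreover have "inv l \<otimes> x \<in> H"
      using x lv(1) LH subgroup.m_closed[OF H_subgroup] subgroup.m_inv_closed[OF H_subgroup] by blast
    ultimately have "v = \<one>" using lv(2) H_Int_N by blast
    then show "x \<in> L" using lv c by simp
  qed
  then show ?thesis using LH k(1) unfolding L_def by blast
qed

lemma generate_lift_set_mult_N:
  assumes gen: "generate G {h, k} = H" and "h \<in> H" "k \<in> H" "n \<in> N" "m \<in> N"
  shows "generate G {h \<otimes> n, k \<otimes> m} <#> N = carrier G"
proof -
  have Hc: "H \<subseteq> carrier G" and Nc: "N \<subseteq> carrier G"
    using subgroup.subset[OF H_subgroup] subgroup.subset[OF N_subgroup] .
  define S where "S = generate G {h \<otimes> n, k \<otimes> m}"
  have Ss: "subgroup S G" unfolding S_def using assms(2-5) Hc Nc by (intro generate_is_subgroup) auto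
  have SN: "subgroup (S <#> N) G" using subgroup_set_mult_normal[OF Ss N_normal] .
  have "h \<otimes> n \<in> S" "k \<otimes> m \<in> S" unfolding S_def by (auto intro: generate.incl)
  moreover have "h \<in> carrier G" "k \<in> carrier G" "n \<in> carrier G" "m \<in> carrier G"
    using assms(2-5) Hc Nc by auto
  then have "h = (h \<otimes> n) \<otimes> inv n" "k = (k \<otimes> m) \<otimes> inv m" by (simp_all add: m_assoc)
  ultimately have "h \<in> S <#> N" "k \<in> S <#> N"
    using subgroup.m_inv_closed[OF N_subgroup] assms(4,5) unfolding mem_set_mult_iff by blast+
  then have "generate G {h, k} \<subseteq> S <#> N" by (intro generate_subgroup_incl[OF _ SN]) auto
  then have HS: "H \<subseteq> S <#> N" using gen by simp
  have NS: "N \<subseteq> S <#> N" using set_mult_subgroup_right[OF Ss N_subgroup] .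
  have "H <#> N \<subseteq> S <#> N"
  proof
    fix x assume "x \<in> H <#> N"
    then obtain a b where "a \<in> H" "b \<in> N" "x = a \<otimes> b" unfolding mem_set_mult_iff by blast
    then show "x \<in> S <#> N" using HS NS subgroup.m_closed[OF SN] by blast
  qed
  then show ?thesis using H_set_mult_N subgroup.subset[OF SN] unfolding S_def by blast
qed

lemma proper_lift_complement:
  assumes gen: "generate G {h, k} = H" and hk: "h \<in> H" "k \<in> H" and nm: "n \<in> N" "m \<in> N"
    and proper: "generate G {h \<otimes> n, k \<otimes> m} \<noteq> carrier G"
  shows "complement G (generate G {h \<otimes> n, k \<otimes> m}) N"
proof -
  have "subgroup (generate G {h \<otimes> n, k \<otimes> m}) G"
    using hk nm subgroup.mem_carrier[OF H_subgroup] subgroup.mem_carrier[OF N_subgroup]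
    by (intro generate_is_subgroup) auto
  moreover have "generate G {h \<otimes> n, k \<otimes> m} <#> N = carrier G"
    using generate_lift_set_mult_N[OF gen hk nm] .
  ultimately show ?thesis
    using proper_supplement_Int_N proper unfolding complement_def by blast
qed

lemma inj_on_lifts:
  assumes k: "k \<in> H"
    and complement: "\<And>m. m \<in> N \<Longrightarrow> complement G (generate G {h \<otimes> n, k \<otimes> m}) N"
  shows "inj_on (\<lambda>m. generate G {h \<otimes> n, k \<otimes> m}) N"
proof (rule inj_onI)
  fix m m' assume m: "m \<in> N" and m': "m' \<in> N"
    and eq: "generate G {h \<otimes> n, k \<otimes> m} = generate G {h \<otimes> n, k \<otimes> m'}"
  let ?W = "generate G {h \<otimes> n, k \<otimes> m'}"
  have c: "k \<in> carrier G" "m \<in> carrier G" "m' \<in> carrier G"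
    using k m m' subgroup.mem_carrier[OF H_subgroup] subgroup.mem_carrier[OF N_subgroup] by auto
  have Ws: "subgroup ?W G" and WN1: "?W \<inter> N = {\<one>}"
    using complement[OF m'] by (auto simp: complement_def)
  have "k \<otimes> m \<in> generate G {h \<otimes> n, k \<otimes> m}" "k \<otimes> m' \<in> ?W" by (auto intro: generate.incl)
  then have "inv (k \<otimes> m) \<otimes> (k \<otimes> m') \<in> ?W"
    using eq subgroup.m_closed[OF Ws] subgroup.m_inv_closed[OF Ws] by metis
  moreover have "inv (k \<otimes> m) \<otimes> (k \<otimes> m') = inv m \<otimes> m'"
    using c by (simp add: inv_mult_group m_assoc)
  ultimately have "inv m \<otimes> m' \<in> ?W \<inter> N"
    using m m' subgroup.m_closed[OF N_subgroup] subgroup.m_inv_closed[OF N_subgroup] by simp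
  then have "inv m \<otimes> m' = \<one>" using WN1 by blast
  then show "m = m'" using c inv_solve_left'[of \<one> m m'] by simp
qed

lemma lift_mem_N_conjugates_H:
  assumes gen: "generate G {h, k} = H" and hk: "h \<in> H" "k \<in> H" and n: "n \<in> N"
    and proper: "\<And>m. m \<in> N \<Longrightarrow> generate G {h \<otimes> n, k \<otimes> m} \<noteq> carrier G"
    and v: "v \<in> N"
  shows "h \<otimes> n \<in> v <# H #> inv v"
proof -
  define W where "W m = generate G {h \<otimes> n, k \<otimes> m}" for m
  have complement: "complement G (W m) N" if "m \<in> N" for m
    unfolding W_def using proper_lift_complement[OF gen hk n that proper[OF that]] .
  have "finite N" using finite_carrier subgroup.subset[OF N_subgroup] finite_subset by blast
  have "W ` N \<subseteq> (\<lambda>u. u <# H #> inv u) ` N"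
  proof
    fix S assume "S \<in> W ` N"
    then obtain m where "m \<in> N" "S = W m" by blast
    then obtain u where "u \<in> N" "S = u <# H #> inv u" using complement_N_conjugate_H[OF complement] by blast
    then show "S \<in> (\<lambda>u. u <# H #> inv u) ` N" by blast
  qed
  moreover have "card ((\<lambda>u. u <# H #> inv u) ` N) \<le> card (W ` N)"
    using card_image[OF inj_on_lifts[OF hk(2) complement[unfolded W_def]]] card_image_le[OF \<open>finite N\<close>]
    unfolding W_def by simp
  ultimately have "W ` N = (\<lambda>u. u <# H #> inv u) ` N"
    by (rule card_seteq[OF finite_imageI[OF \<open>finite N\<close>]])
  then have "v <# H #> inv v \<in> W ` N" using v by (simp only:) (rule imageI)
  then obtain m where "v <# H #> inv v = W m" by (elim imageE)
  moreover have "h \<otimes> n \<in> W m" unfolding W_def by (rule generate.incl) simp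
  ultimately show ?thesis by simp
qed

lemma generating_pair_lift:
  assumes h: "h \<in> H" "h \<noteq> \<one>" and n: "n \<in> N" and k: "k \<in> H"
    and gen: "generate G {h, k} = H"
  shows "\<exists>y\<in>carrier G. generate G {h \<otimes> n, y} = carrier G"
proof (rule ccontr)
  assume no_lift: "\<not> ?thesis"
  have c: "h \<in> carrier G" "n \<in> carrier G" "k \<in> carrier G"
    using h n k subgroup.mem_carrier[OF H_subgroup] subgroup.mem_carrier[OF N_subgroup] by auto
  have "generate G {h \<otimes> n, k \<otimes> m} \<noteq> carrier G" if "m \<in> N" for m
    using no_lift that c subgroup.mem_carrier[OF N_subgroup] by auto
  then have "h \<otimes> n \<in> core H G"
    using mem_core_if_mem_N_conjugates lift_mem_N_conjugates_H[OF gen h(1) k n] c by simp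
  then have "h \<otimes> n = \<one>" using core_free_H by (simp add: core_free_def)
  then have "h = inv n" using c by (simp add: inv_equality)
  then have "h \<in> H \<inter> N" using h(1) subgroup.m_inv_closed[OF N_subgroup n] by simp
  then show False using H_Int_N h(2) by blast
qed

lemma mult_mem_gen_elems_iff:
  assumes h: "h \<in> H" "h \<noteq> \<one>" and n: "n \<in> N"
  shows "h \<otimes> n \<in> gen_elems G \<longleftrightarrow> h \<in> gen_elems (G\<lparr>carrier := H\<rparr>)"
proof -
  have "generate (G\<lparr>carrier := H\<rparr>) {h, k} = generate G {h, k}" if "k \<in> H" for k
    using generate_consistent[of "{h, k}" H] h(1) that H_subgroup by simp
  then have "h \<in> gen_elems (G\<lparr>carrier := H\<rparr>) \<longleftrightarrow> (\<exists>k\<in>H. generate G {h, k} = H)"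
    using h(1) by (auto simp: gen_elems_def)
  moreover have "h \<otimes> n \<in> carrier G"
    using h n subgroup.mem_carrier[OF H_subgroup] subgroup.mem_carrier[OF N_subgroup] by simp
  then have "h \<otimes> n \<in> gen_elems G \<longleftrightarrow> (\<exists>y\<in>carrier G. generate G {h \<otimes> n, y} = carrier G)"
    by (simp add: gen_elems_def)
  ultimately show ?thesis using generating_pair_project generating_pair_lift h n by blast
qed

end

theorem proposition2p2:
  fixes G (structure)
  assumes "group G" and "finite (carrier G)"
    and "primitive_monolithic G" and "solvable G"
    and "N = socle G"
    and "maximal_subgroup H G" and "core_free H G"
    and "h \<in> H" and "h \<noteq> \<one>" and "n \<in> N"
  shows "h \<otimes> n \<in> gen_elems G \<longleftrightarrow> h \<in> gen_elems (G\<lparr>carrier := H\<rparr>)"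
proof -
  interpret group G by fact
  obtain M where M: "minimal_normal M G" and unique: "\<And>K. minimal_normal K G \<Longrightarrow> K = M"
    using assms(3) unfolding primitive_monolithic_def by metis
  have "minimal_normal N G" using socle_eq_unique_minimal_normal[OF M unique] M assms(5) by simp
  then interpret primitive_solvable_group G N H
    using assms by unfold_locales
  show ?thesis using mult_mem_gen_elems_iff assms(8-10) .
qed

end
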